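(* Let $R,S$ be nonnegative integral vectors such that $\mathcal{A}(R,S)$ is a convex-class, and let $A\in\mathcal{A}(R,S)$. Let $I$ and $I'$ be the horizontal intervals of two different rows of $A$. Then at least one of the following holds: (i) $|I|=|I'|=1$; (ii) $I\subseteq I'$ or $I'\subseteq I$; (iii) $I'$ is a 1-shift of $I$. In particular, if $|I|=k$ and $|I'|\ge k+1$ for some $k\ge1$, then $I\subseteq I'$. The analogous statements hold for the vertical intervals of two different columns of $A$. Moreover, for every interchange applicable to a matrix in $\mathcal{A}(R,S)$, the two rows involved either both contain exactly one $1$ or have horizontal intervals forming a 1-shift pair, and likewise the two columns involved either both contain exactly one $1$ or have vertical intervals forming a 1-shift pair.
   Context: $\mathcal{A}(R,S)$ is the set of $(0,1)$-matrices with row sum vector $R$ and column sum vector $S$. A $(0,1)$-matrix is convex if in every row and column the 1's occur consecutively; $\mathcal{A}(R,S)$ is a convex-class if every matrix in it is convex. For $A=[a_{ij}]$, the horizontal interval of row $i$ is $\{j: a_{ij}=1\}$ and the vertical interval of column $j$ is $\{i: a_{ij}=1\}$. For intervals $I=\{k,k+1,\dots,l\}$ and $I'=\{k+1,\dots,l+1\}$ with $k<l$, $I'$ is called a 1-shift of $I$ and vice versa, and $I,I'$ is a 1-shift pair. An interchange replaces a $2\times2$ submatrix $\begin{bmatrix}1&0\\0&1\end{bmatrix}$ by $\begin{bmatrix}0&1\\1&0\end{bmatrix}$ or vice versa. *)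

theory Defs
  imports Main
begin

text \<open>An m x n (0,1)-matrix is represented as a function nat => nat => nat,
  with m = length R rows and n = length S columns (0-based indices),
  entries in {0,1} inside the bounds and 0 outside.\<close>

definition zero_one_matrix :: "nat \<Rightarrow> nat \<Rightarrow> (nat \<Rightarrow> nat \<Rightarrow> nat) \<Rightarrow> bool" where
  "zero_one_matrix m n A \<longleftrightarrow>
     (\<forall>i<m. \<forall>j<n. A i j = 0 \<or> A i j = 1) \<and>
     (\<forall>i j. \<not> (i < m \<and> j < n) \<longrightarrow> A i j = 0)"

definition classA :: "nat list \<Rightarrow> nat list \<Rightarrow> (nat \<Rightarrow> nat \<Rightarrow> nat) set" where
  "classA R S = {A. zero_one_matrix (length R) (length S) A \<and>
     (\<forall>i<length R. (\<Sum>j<length S. A i j) = R ! i) \<and>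
     (\<forall>j<length S. (\<Sum>i<length R. A i j) = S ! j)}"

definition convex_matrix :: "nat \<Rightarrow> nat \<Rightarrow> (nat \<Rightarrow> nat \<Rightarrow> nat) \<Rightarrow> bool" where
  "convex_matrix m n A \<longleftrightarrow>
     (\<forall>i<m. \<forall>j1 j2 j. j1 \<le> j \<and> j \<le> j2 \<and> j2 < n \<and> A i j1 = 1 \<and> A i j2 = 1 \<longrightarrow> A i j = 1) \<and>
     (\<forall>j<n. \<forall>i1 i2 i. i1 \<le> i \<and> i \<le> i2 \<and> i2 < m \<and> A i1 j = 1 \<and> A i2 j = 1 \<longrightarrow> A i j = 1)"

definition convex_class :: "nat list \<Rightarrow> nat list \<Rightarrow> bool" where
  "convex_class R S \<longleftrightarrow> (\<forall>A\<in>classA R S. convex_matrix (length R) (length S) A)"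

definition hint :: "nat \<Rightarrow> (nat \<Rightarrow> nat \<Rightarrow> nat) \<Rightarrow> nat \<Rightarrow> nat set" where
  "hint n A i = {j. j < n \<and> A i j = 1}"

definition vint :: "nat \<Rightarrow> (nat \<Rightarrow> nat \<Rightarrow> nat) \<Rightarrow> nat \<Rightarrow> nat set" where
  "vint m A j = {i. i < m \<and> A i j = 1}"

definition shift_pair :: "nat set \<Rightarrow> nat set \<Rightarrow> bool" where
  "shift_pair I J \<longleftrightarrow> (\<exists>k l. k < l \<and>
     ((I = {k..l} \<and> J = {k+1..l+1}) \<or> (J = {k..l} \<and> I = {k+1..l+1})))"

definition interchange_at :: "(nat \<Rightarrow> nat \<Rightarrow> nat) \<Rightarrow> nat \<Rightarrow> nat \<Rightarrow> nat \<Rightarrow> nat \<Rightarrow> bool" where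
  "interchange_at B i i' j j' \<longleftrightarrow>
     (B i j = 1 \<and> B i' j' = 1 \<and> B i j' = 0 \<and> B i' j = 0) \<or>
     (B i j = 0 \<and> B i' j' = 0 \<and> B i j' = 1 \<and> B i' j = 1)"

end

(* If the horizontal intervals I and J of two rows cross, pick a in I - J and
   d in J - I.  The interchange moving the 1 of the first row from column a to d
   and the 1 of the second row from d to a stays in the class, so both modified
   rows are again intervals.  Exchanging a point of an interval {p..q} (p < q) for
   an outside point keeps it an interval only if the removed point is one end and
   the added point is adjacent to the other end.  Applied to both rows, this makes
   I and J 1-shifts of each other unless both are singletons.  Columns follow by
   transposition, and the two rows (columns) of an applicable interchange cross. *)

theory Submission
  imports Defs
begin

definition order_convex :: "nat set \<Rightarrow> bool" where
  "order_convex X \<longleftrightarrow> (\<forall>x\<in>X. \<forall>y\<in>X. {x..y} \<subseteq> X)"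

definition compatible_intervals :: "nat set \<Rightarrow> nat set \<Rightarrow> bool" where
  "compatible_intervals I J \<longleftrightarrow>
     (card I = 1 \<and> card J = 1) \<or> I \<subseteq> J \<or> J \<subseteq> I \<or> shift_pair I J"

lemma order_convex_eq_atLeastAtMost:
  assumes "finite X" "X \<noteq> {}" "order_convex X"
  shows "X = {Min X..Max X}"
proof
  show "X \<subseteq> {Min X..Max X}" using assms(1) by auto
  show "{Min X..Max X} \<subseteq> X" using assms Min_in Max_in unfolding order_convex_def by blast
qed

lemma order_convex_exchange_endpoint:
  assumes "p < q" "x \<in> {p..q}" "y \<notin> {p..q}" and conv: "order_convex ({p..q} - {x} \<union> {y})"
  shows "(x = p \<and> y = Suc q) \<or> (x = q \<and> Suc y = p)"
proof -
  let ?X = "{p..q} - {x} \<union> {y}"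
  have between: "z \<in> ?X" if "u \<in> ?X" "v \<in> ?X" "u \<le> z" "z \<le> v" for u v z
    using conv that unfolding order_convex_def by (meson atLeastAtMost_iff subsetD)
  have in_X: "z \<in> ?X" if "z \<in> {p..q}" "z \<noteq> x" for z
    using that by simp
  consider "q < y" | "y < p" using assms(3) by fastforce
  then show ?thesis
  proof cases
    case 1
    have "x = p"
    proof (rule ccontr)
      assume "x \<noteq> p"
      then have "x \<in> ?X" using between[of p y x] in_X[of p] assms(1,2) 1 by simp
      then show False using assms(2,3) by auto
    qed
    moreover have "y = Suc q"
    proof (rule ccontr)
      assume "y \<noteq> Suc q"
      then have "Suc q \<in> ?X" using between[of q y "Suc q"] in_X[of q] assms(1) \<open>x = p\<close> 1 by simp
      then show False using \<open>y \<noteq> Suc q\<close> by simp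
    qed
    ultimately show ?thesis by simp
  next
    case 2
    have "x = q"
    proof (rule ccontr)
      assume "x \<noteq> q"
      then have "x \<in> ?X" using between[of y q x] in_X[of q] assms(1,2) 2 by simp
      then show False using assms(2,3) by auto
    qed
    moreover have "Suc y = p"
    proof (rule ccontr)
      assume "Suc y \<noteq> p"
      then have "p - 1 \<in> ?X" using between[of y p "p - 1"] in_X[of p] assms(1) \<open>x = q\<close> 2 by simp
      then show False using \<open>Suc y \<noteq> p\<close> 2 by auto
    qed
    ultimately show ?thesis by simp
  qed
qed

lemma shift_pair_card_eq: "shift_pair I J \<Longrightarrow> card I = card J"
  by (auto simp: shift_pair_def)

lemma exchange_closed_intervals_compatible:
  assumes fin: "finite I" "finite J" and conv: "order_convex I" "order_convex J"
    and exch: "\<And>a d. a \<in> I - J \<Longrightarrow> d \<in> J - I \<Longrightarrow>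
                 order_convex (I - {a} \<union> {d}) \<and> order_convex (J - {d} \<union> {a})"
  shows "compatible_intervals I J"
proof (cases "I \<subseteq> J \<or> J \<subseteq> I")
  case True
  then show ?thesis by (auto simp: compatible_intervals_def)
next
  case False
  then obtain a d where a: "a \<in> I - J" and d: "d \<in> J - I" by blast
  define p q r s where ends: "p = Min I" "q = Max I" "r = Min J" "s = Max J"
  have I: "I = {p..q}" and J: "J = {r..s}"
    using order_convex_eq_atLeastAtMost fin conv a d ends by blast+
  have I_ends: "(a' = p \<and> d' = Suc q) \<or> (a' = q \<and> Suc d' = p)"
    if "p < q" "a' \<in> I - J" "d' \<in> J - I" for a' d'
    using order_convex_exchange_endpoint[OF \<open>p < q\<close>] exch[OF that(2,3)] that I by blast
  have J_ends: "(d' = r \<and> a' = Suc s) \<or> (d' = s \<and> Suc a' = r)"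
    if "r < s" "a' \<in> I - J" "d' \<in> J - I" for a' d'
    using order_convex_exchange_endpoint[OF \<open>r < s\<close>] exch[OF that(2,3)] that J by blast
  have "p \<le> q" "r \<le> s" using I J a d by auto
  then consider "p < q" "r < s" | "p < q" "r = s" | "p = q" "r < s" | "p = q" "r = s"
    by linarith
  then show ?thesis
  proof cases
    case 1
    then have "(r = Suc p \<and> s = Suc q) \<or> (p = Suc r \<and> q = Suc s)"
      using I_ends[OF 1(1) a d] J_ends[OF 1(2) a d] a d unfolding I J by auto
    then have "shift_pair I J"
      unfolding I J shift_pair_def using 1 by auto
    then show ?thesis by (simp add: compatible_intervals_def)
  next
    case 2
    \<comment> \<open>the single element of J can be exchanged with either end of I\<close>
    have "p \<in> I - J" "q \<in> I - J" using 2 I J d by auto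
    then have "d = Suc q" "Suc d = p" using I_ends[OF \<open>p < q\<close> _ d] 2 by auto
    then show ?thesis using 2 by simp
  next
    case 3
    have "r \<in> J - I" "s \<in> J - I" using 3 I J a by auto
    then have "a = Suc s" "Suc a = r" using J_ends[OF \<open>r < s\<close> a] 3 by auto
    then show ?thesis using 3 by simp
  next
    case 4
    then show ?thesis using I J by (simp add: compatible_intervals_def)
  qed
qed

lemma compatible_intervals_subset_if_card_less:
  assumes "compatible_intervals I J" "card I \<noteq> 0" "card I < card J"
  shows "I \<subseteq> J"
proof -
  have "\<not> J \<subseteq> I" using assms(2,3) card_mono[of I J] card_ge_0_finite by fastforce
  then show ?thesis using assms shift_pair_card_eq unfolding compatible_intervals_def by force
qed

definition interchange :: "(nat \<Rightarrow> nat \<Rightarrow> nat) \<Rightarrow> nat \<Rightarrow> nat \<Rightarrow> nat \<Rightarrow> nat \<Rightarrow> nat \<Rightarrow> nat \<Rightarrow> nat" where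
  "interchange A i i' j j' = (\<lambda>x y.
     if (x, y) = (i, j) \<or> (x, y) = (i', j') then 0
     else if (x, y) = (i, j') \<or> (x, y) = (i', j) then 1
     else A x y)"

lemma sum_eq_if_eq_off_pair:
  fixes f g :: "'a \<Rightarrow> 'b::comm_monoid_add"
  assumes "finite X" "c \<in> X" "c' \<in> X" "c \<noteq> c'" "f c + f c' = g c + g c'"
    and "\<And>x. x \<in> X - {c, c'} \<Longrightarrow> f x = g x"
  shows "sum f X = sum g X"
proof -
  have "sum f X = sum f (X - {c, c'}) + (f c + f c')"
    using assms(1-4) sum.subset_diff[of "{c, c'}" X f] by simp
  also have "\<dots> = sum g (X - {c, c'}) + (g c + g c')"
    using assms(5,6) sum.cong[of "X - {c, c'}" "X - {c, c'}" f g] by simp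
  also have "\<dots> = sum g X"
    using assms(1-4) sum.subset_diff[of "{c, c'}" X g] by simp
  finally show ?thesis .
qed

lemma interchange_in_classA:
  assumes A: "A \<in> classA R S"
    and i: "i < length R" "i' < length R" "i \<noteq> i'"
    and j: "j < length S" "j' < length S" "j \<noteq> j'"
    and entries: "A i j = 1" "A i' j' = 1" "A i j' = 0" "A i' j = 0"
  shows "interchange A i i' j j' \<in> classA R S"
proof -
  let ?B = "interchange A i i' j j'"
  have "zero_one_matrix (length R) (length S) ?B"
    using A i j unfolding classA_def zero_one_matrix_def interchange_def by auto
  moreover have "(\<Sum>y<length S. ?B x y) = (\<Sum>y<length S. A x y)" for x
    by (rule sum_eq_if_eq_off_pair[of _ j j']) (use i j entries in \<open>auto simp: interchange_def\<close>)
  moreover have "(\<Sum>x<length R. ?B x y) = (\<Sum>x<length R. A x y)" for y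
    by (rule sum_eq_if_eq_off_pair[of _ i i']) (use i j entries in \<open>auto simp: interchange_def\<close>)
  ultimately show ?thesis using A unfolding classA_def by simp
qed

lemma hint_interchange:
  assumes "i \<noteq> i'" "j < n" "j' < n" "j \<noteq> j'"
  shows "hint n (interchange A i i' j j') i = hint n A i - {j} \<union> {j'}"
    and "hint n (interchange A i i' j j') i' = hint n A i' - {j'} \<union> {j}"
  using assms by (auto simp: hint_def interchange_def)

lemma order_convex_hint:
  assumes "convex_matrix m n A" "i < m"
  shows "order_convex (hint n A i)"
  unfolding order_convex_def
proof (intro ballI subsetI)
  fix x y z assume "x \<in> hint n A i" "y \<in> hint n A i" "z \<in> {x..y}"
  moreover have "x \<le> z \<and> z \<le> y \<and> y < n \<and> A i x = 1 \<and> A i y = 1 \<longrightarrow> A i z = 1"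
    using assms unfolding convex_matrix_def by blast
  ultimately show "z \<in> hint n A i" by (auto simp: hint_def)
qed

lemma convex_class_row_intervals_compatible:
  assumes conv: "convex_class R S" and A: "A \<in> classA R S"
    and i: "i < length R" "i' < length R" "i \<noteq> i'"
  shows "compatible_intervals (hint (length S) A i) (hint (length S) A i')"
proof (rule exchange_closed_intervals_compatible)
  show "finite (hint (length S) A i)" "finite (hint (length S) A i')"
    by (simp_all add: hint_def)
  show "order_convex (hint (length S) A i)" "order_convex (hint (length S) A i')"
    using conv A i order_convex_hint unfolding convex_class_def by blast+
next
  fix a d
  assume a: "a \<in> hint (length S) A i - hint (length S) A i'"
    and d: "d \<in> hint (length S) A i' - hint (length S) A i"
  have "a < length S" "d < length S" "a \<noteq> d" using a d by (auto simp: hint_def)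
  moreover have "A i a = 1" "A i' d = 1" "A i d = 0" "A i' a = 0"
    using a d i A by (auto simp: hint_def classA_def zero_one_matrix_def)
  ultimately have "interchange A i i' a d \<in> classA R S"
    using interchange_in_classA A i by blast
  then have "convex_matrix (length R) (length S) (interchange A i i' a d)"
    using conv unfolding convex_class_def by blast
  then show "order_convex (hint (length S) A i - {a} \<union> {d}) \<and>
             order_convex (hint (length S) A i' - {d} \<union> {a})"
    using order_convex_hint hint_interchange i \<open>a < length S\<close> \<open>d < length S\<close> \<open>a \<noteq> d\<close>
    by metis
qed

lemma classA_transpose: "A \<in> classA R S \<Longrightarrow> (\<lambda>i j. A j i) \<in> classA S R"
  by (auto simp: classA_def zero_one_matrix_def)

lemma convex_matrix_transpose: "convex_matrix n m (\<lambda>i j. A j i) \<longleftrightarrow> convex_matrix m n A"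
  unfolding convex_matrix_def by blast

lemma convex_class_transpose:
  assumes "convex_class R S"
  shows "convex_class S R"
  unfolding convex_class_def
proof
  fix A assume "A \<in> classA S R"
  then have "convex_matrix (length R) (length S) (\<lambda>i j. A j i)"
    using assms classA_transpose unfolding convex_class_def by blast
  then show "convex_matrix (length S) (length R) A"
    using convex_matrix_transpose by blast
qed

lemma vint_eq_hint_transpose: "vint m A j = hint m (\<lambda>i j. A j i) j"
  by (simp add: vint_def hint_def)

lemma convex_class_column_intervals_compatible:
  assumes "convex_class R S" "A \<in> classA R S"
    and "j < length S" "j' < length S" "j \<noteq> j'"
  shows "compatible_intervals (vint (length R) A j) (vint (length R) A j')"
  unfolding vint_eq_hint_transpose
  using convex_class_row_intervals_compatible[OF convex_class_transpose[OF assms(1)]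
      classA_transpose[OF assms(2)]] assms(3-5) by blast

lemma interchange_at_not_nested:
  assumes "interchange_at B i i' j j'" "i < m" "i' < m" "j < n" "j' < n"
  shows "\<not> hint n B i \<subseteq> hint n B i'" "\<not> hint n B i' \<subseteq> hint n B i"
    and "\<not> vint m B j \<subseteq> vint m B j'" "\<not> vint m B j' \<subseteq> vint m B j"
  using assms by (auto simp: interchange_at_def hint_def vint_def)

lemma convex_class_interchange_at:
  assumes "convex_class R S" "B \<in> classA R S" "interchange_at B i i' j j'"
    and "i < i'" "i' < length R" "j < j'" "j' < length S"
  shows "(card (hint (length S) B i) = 1 \<and> card (hint (length S) B i') = 1) \<or>
         shift_pair (hint (length S) B i) (hint (length S) B i')"
    and "(card (vint (length R) B j) = 1 \<and> card (vint (length R) B j') = 1) \<or>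
         shift_pair (vint (length R) B j) (vint (length R) B j')"
  using convex_class_row_intervals_compatible[OF assms(1,2), of i i']
    convex_class_column_intervals_compatible[OF assms(1,2), of j j']
    interchange_at_not_nested[OF assms(3), of "length R" "length S"] assms(4-7)
  unfolding compatible_intervals_def by auto

theorem mainTheorem9:
  fixes R S :: "nat list" and A :: "nat \<Rightarrow> nat \<Rightarrow> nat"
  defines "m \<equiv> length R" and "n \<equiv> length S"
  assumes conv: "convex_class R S" and AinA: "A \<in> classA R S"
  shows
   "(\<forall>i<m. \<forall>i'<m. i \<noteq> i' \<longrightarrow>
       (card (hint n A i) = 1 \<and> card (hint n A i') = 1) \<or>
       hint n A i \<subseteq> hint n A i' \<or> hint n A i' \<subseteq> hint n A i \<or>
       shift_pair (hint n A i) (hint n A i'))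
  \<and> (\<forall>i<m. \<forall>i'<m. \<forall>k. i \<noteq> i' \<and> k \<ge> 1 \<and> card (hint n A i) = k \<and> card (hint n A i') \<ge> k + 1
        \<longrightarrow> hint n A i \<subseteq> hint n A i')
  \<and> (\<forall>j<n. \<forall>j'<n. j \<noteq> j' \<longrightarrow>
       (card (vint m A j) = 1 \<and> card (vint m A j') = 1) \<or>
       vint m A j \<subseteq> vint m A j' \<or> vint m A j' \<subseteq> vint m A j \<or>
       shift_pair (vint m A j) (vint m A j'))
  \<and> (\<forall>j<n. \<forall>j'<n. \<forall>k. j \<noteq> j' \<and> k \<ge> 1 \<and> card (vint m A j) = k \<and> card (vint m A j') \<ge> k + 1
        \<longrightarrow> vint m A j \<subseteq> vint m A j')
  \<and> (\<forall>B\<in>classA R S. \<forall>i i' j j'. i < i' \<and> i' < m \<and> j < j' \<and> j' < n \<and> interchange_at B i i' j j' \<longrightarrow>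
        ((card (hint n B i) = 1 \<and> card (hint n B i') = 1) \<or> shift_pair (hint n B i) (hint n B i')) \<and>
        ((card (vint m B j) = 1 \<and> card (vint m B j') = 1) \<or> shift_pair (vint m B j) (vint m B j')))"
  unfolding m_def n_def
  apply (intro conjI allI impI ballI)
  subgoal
    using convex_class_row_intervals_compatible[OF conv AinA]
    by (simp add: compatible_intervals_def)
  subgoal for i i'
    using convex_class_row_intervals_compatible[OF conv AinA, of i i']
    by (intro compatible_intervals_subset_if_card_less) auto
  subgoal
    using convex_class_column_intervals_compatible[OF conv AinA]
    by (simp add: compatible_intervals_def)
  subgoal for j j'
    using convex_class_column_intervals_compatible[OF conv AinA, of j j']
    by (intro compatible_intervals_subset_if_card_less) auto
  using convex_class_interchange_at[OF conv] by blast+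

end
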